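(* Let $r\ge2$, $k\ge 3$, and let $\widehat{F}_k$ be any $r$-coloring of $K_k$. Let $G$ be a graph on $n$ vertices, $S\subseteq V(G)$ an independent set with $s=|S|$, $H=G-S$ and $A=V(G)\setminus S$. Then there exists a vertex $v\in S$ with the following property: if $\widetilde{G}$ is the graph with vertex set $V(H)\cup\widetilde{S}$, where $\widetilde{S}$ is an independent set of $s$ new vertices each having neighborhood exactly $N_G(v)$ (so each is a twin of $v$), and $\widetilde{G}[A]=G[A]$, then $c_{r,\widehat{F}_k}(\widetilde{G})\ge c_{r,\widehat{F}_k}(G)$.
   Context: An $r$-coloring of a graph assigns colors from $\{1,\dots,r\}$ to edges (not necessarily properly). A copy of $\widehat{F}_k$ in a colored graph is a set of $k$ pairwise adjacent vertices admitting a bijection to $V(K_k)$ under which two edges have equal colors iff their images have equal colors in $\widehat{F}_k$; a coloring is $\widehat{F}_k$-free if it has no copy. $c_{r,\widehat{F}_k}(G)$ is the number of $\widehat{F}_k$-free $r$-colorings of $E(G)$. Two vertices are twins if they are non-adjacent and have the same neighborhood. *)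

theory Defs
  imports "HOL-Library.FuncSet"
begin

definition simple_graph :: "'a set \<Rightarrow> 'a set set \<Rightarrow> bool" where
  "simple_graph V E \<longleftrightarrow> finite V \<and> (\<forall>e\<in>E. e \<subseteq> V \<and> card e = 2)"

definition nbhd :: "'a set set \<Rightarrow> 'a \<Rightarrow> 'a set" where
  "nbhd E v = {u. {u, v} \<in> E}"

definition indep_set :: "'a set set \<Rightarrow> 'a set \<Rightarrow> bool" where
  "indep_set E S \<longleftrightarrow> (\<forall>x\<in>S. \<forall>y\<in>S. {x, y} \<notin> E)"

definition Kk_edges :: "nat \<Rightarrow> nat set set" where
  "Kk_edges k = {e. e \<subseteq> {0..<k} \<and> card e = 2}"

definition colorings :: "nat \<Rightarrow> 'a set set \<Rightarrow> ('a set \<Rightarrow> nat) set" where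
  "colorings r E = E \<rightarrow>\<^sub>E {1..r}"

definition is_copy :: "'a set \<Rightarrow> 'a set set \<Rightarrow> ('a set \<Rightarrow> nat) \<Rightarrow> nat \<Rightarrow> (nat set \<Rightarrow> nat) \<Rightarrow> 'a set \<Rightarrow> bool" where
  "is_copy V E c k f X \<longleftrightarrow> X \<subseteq> V \<and> card X = k \<and>
     (\<forall>x\<in>X. \<forall>y\<in>X. x \<noteq> y \<longrightarrow> {x, y} \<in> E) \<and>
     (\<exists>\<phi>. bij_betw \<phi> X {0..<k} \<and>
        (\<forall>x\<in>X. \<forall>y\<in>X. \<forall>x'\<in>X. \<forall>y'\<in>X. x \<noteq> y \<longrightarrow> x' \<noteq> y' \<longrightarrow>
           (c {x, y} = c {x', y'} \<longleftrightarrow> f {\<phi> x, \<phi> y} = f {\<phi> x', \<phi> y'})))"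

definition pattern_free :: "'a set \<Rightarrow> 'a set set \<Rightarrow> ('a set \<Rightarrow> nat) \<Rightarrow> nat \<Rightarrow> (nat set \<Rightarrow> nat) \<Rightarrow> bool" where
  "pattern_free V E c k f \<longleftrightarrow> \<not> (\<exists>X. is_copy V E c k f X)"

definition count_free :: "nat \<Rightarrow> nat \<Rightarrow> (nat set \<Rightarrow> nat) \<Rightarrow> 'a set \<Rightarrow> 'a set set \<Rightarrow> nat" where
  "count_free r k f V E = card {c \<in> colorings r E. pattern_free V E c k f}"

(* The graph G~: vertices Inl ` A (A = V - S) and s new vertices Inr i (i < s);
   G~[A] = G[A], and each new vertex has neighbourhood exactly N_G(v). *)
definition twin_vertices :: "'a set \<Rightarrow> 'a set \<Rightarrow> ('a + nat) set" where
  "twin_vertices V S = Inl ` (V - S) \<union> Inr ` {0..<card S}"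

definition twin_edges :: "'a set \<Rightarrow> 'a set set \<Rightarrow> 'a set \<Rightarrow> 'a \<Rightarrow> ('a + nat) set set" where
  "twin_edges V E S v =
     {Inl ` e | e. e \<in> E \<and> e \<subseteq> V - S} \<union>
     {{Inl u, Inr i} | u i. u \<in> nbhd E v \<and> i < card S}"

end

theory Submission
  imports Defs "HOL-Library.Disjoint_Sets" "HOL-Analysis.Convex"
begin

text \<open>
  A copy of the pattern is a clique, so it meets the independent set \<open>S\<close> in at most one vertex.
  Hence, with \<open>A = V - S\<close>, a colouring of \<open>G\<close> is pattern-free iff its restriction \<open>c\<close> to \<open>G[A]\<close>
  is, and so is its restriction to \<open>G[A \<union> {u}]\<close> for every \<open>u \<in> S\<close>. Writing \<open>x u c\<close> for the
  number of free extensions of \<open>c\<close> to the edges at \<open>u\<close>, this gives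
  \<open>count G = (\<Sum>c. \<Prod>u\<in>S. x u c)\<close>. Every twin in the twin graph \<open>G\<^sub>v\<close> is a relabelled
  copy of \<open>v\<close>, so \<open>count G\<^sub>v = (\<Sum>c. x v c ^ s)\<close>. By AM-GM, \<open>s * (\<Prod>u\<in>S. x u c) \<le> (\<Sum>u\<in>S. x u c ^ s)\<close>,
  hence \<open>s * count G \<le> (\<Sum>v\<in>S. count G\<^sub>v)\<close> and some \<open>v \<in> S\<close> has \<open>count G \<le> count G\<^sub>v\<close>.
\<close>

lemma is_copy_cong:
  assumes "\<And>e. e \<in> E \<Longrightarrow> c e = c' e"
  shows "is_copy V E c k f X = is_copy V E c' k f X"
proof (cases "\<forall>x\<in>X. \<forall>y\<in>X. x \<noteq> y \<longrightarrow> {x, y} \<in> E")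
  case True
  then have eq: "(c {x, y} = c {x', y'}) = (c' {x, y} = c' {x', y'})"
    if "x \<in> X" "y \<in> X" "x' \<in> X" "y' \<in> X" "x \<noteq> y" "x' \<noteq> y'" for x y x' y'
    using that assms by metis
  have "(\<forall>x\<in>X. \<forall>y\<in>X. \<forall>x'\<in>X. \<forall>y'\<in>X. x \<noteq> y \<longrightarrow> x' \<noteq> y' \<longrightarrow>
        (c {x, y} = c {x', y'} \<longleftrightarrow> f {\<phi> x, \<phi> y} = f {\<phi> x', \<phi> y'}))
    \<longleftrightarrow> (\<forall>x\<in>X. \<forall>y\<in>X. \<forall>x'\<in>X. \<forall>y'\<in>X. x \<noteq> y \<longrightarrow> x' \<noteq> y' \<longrightarrow>
        (c' {x, y} = c' {x', y'} \<longleftrightarrow> f {\<phi> x, \<phi> y} = f {\<phi> x', \<phi> y'}))" for \<phi>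
    by (intro ball_cong[OF refl] imp_cong[OF refl]) (simp add: eq)
  then show ?thesis unfolding is_copy_def by simp
next
  case False
  then show ?thesis unfolding is_copy_def by blast
qed

lemma pattern_free_cong:
  assumes "\<And>e. e \<in> E \<Longrightarrow> c e = c' e"
  shows "pattern_free V E c k f = pattern_free V E c' k f"
  unfolding pattern_free_def by (simp add: is_copy_cong[OF assms])

lemma ex_bij_betw_inj_image:
  assumes "inj h"
  shows "(\<exists>\<phi>. bij_betw \<phi> (h ` X) K \<and> P (\<phi> \<circ> h)) \<longleftrightarrow> (\<exists>\<psi>. bij_betw \<psi> X K \<and> P \<psi>)"
proof -
  have bij: "bij_betw \<phi> (h ` X) K \<longleftrightarrow> bij_betw (\<phi> \<circ> h) X K" for \<phi>
    using bij_betw_comp_iff[OF bij_betw_imageI[OF inj_on_subset[OF assms subset_UNIV] refl]] .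
  show ?thesis
  proof
    assume "\<exists>\<psi>. bij_betw \<psi> X K \<and> P \<psi>"
    then obtain \<psi> where "bij_betw \<psi> X K" "P \<psi>" by blast
    moreover have "\<psi> \<circ> inv h \<circ> h = \<psi>" using assms by auto
    ultimately show "\<exists>\<phi>. bij_betw \<phi> (h ` X) K \<and> P (\<phi> \<circ> h)" using bij by metis
  qed (use bij in blast)
qed

lemma is_copy_relabel:
  assumes h: "inj h" and c: "\<And>e. e \<in> E \<Longrightarrow> c' (h ` e) = c e"
  shows "is_copy (h ` V) ((`) h ` E) c' k f (h ` X) \<longleftrightarrow> is_copy V E c k f X"
proof -
  have "inj ((`) h)" using inj_on_image[of h UNIV] h by simp
  then have adj: "{h x, h y} \<in> (`) h ` E \<longleftrightarrow> {x, y} \<in> E" for x y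
    using inj_image_mem_iff[of "(`) h" "{x, y}" E] by simp
  have clique: "(\<forall>x\<in>h ` X. \<forall>y\<in>h ` X. x \<noteq> y \<longrightarrow> {x, y} \<in> (`) h ` E)
      \<longleftrightarrow> (\<forall>x\<in>X. \<forall>y\<in>X. x \<noteq> y \<longrightarrow> {x, y} \<in> E)"
    using adj h by (simp add: inj_eq)
  have pattern: "(\<forall>x\<in>h ` X. \<forall>y\<in>h ` X. \<forall>x'\<in>h ` X. \<forall>y'\<in>h ` X. x \<noteq> y \<longrightarrow> x' \<noteq> y' \<longrightarrow>
           (c' {x, y} = c' {x', y'} \<longleftrightarrow> f {\<phi> x, \<phi> y} = f {\<phi> x', \<phi> y'}))
      \<longleftrightarrow> (\<forall>x\<in>X. \<forall>y\<in>X. \<forall>x'\<in>X. \<forall>y'\<in>X. x \<noteq> y \<longrightarrow> x' \<noteq> y' \<longrightarrow>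
           (c {x, y} = c {x', y'} \<longleftrightarrow> f {(\<phi> \<circ> h) x, (\<phi> \<circ> h) y} = f {(\<phi> \<circ> h) x', (\<phi> \<circ> h) y'}))"
    if cl: "\<forall>x\<in>X. \<forall>y\<in>X. x \<noteq> y \<longrightarrow> {x, y} \<in> E" for \<phi>
  proof -
    have col: "x \<in> X \<Longrightarrow> y \<in> X \<Longrightarrow> x \<noteq> y \<Longrightarrow> c' {h x, h y} = c {x, y}" for x y
      using c[of "{x, y}"] cl by simp
    show ?thesis using h by (simp add: inj_eq col cong: ball_cong)
  qed
  show ?thesis
  proof (cases "\<forall>x\<in>X. \<forall>y\<in>X. x \<noteq> y \<longrightarrow> {x, y} \<in> E")
    case True
    have "h ` X \<subseteq> h ` V \<longleftrightarrow> X \<subseteq> V" "card (h ` X) = card X"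
      using h by (auto simp: inj_image_subset_iff card_image inj_on_subset)
    then show ?thesis
      unfolding is_copy_def clique pattern[OF True] ex_bij_betw_inj_image[OF h, of _ _ "\<lambda>\<psi>. \<forall>x\<in>X. \<forall>y\<in>X. \<forall>x'\<in>X. \<forall>y'\<in>X.
        x \<noteq> y \<longrightarrow> x' \<noteq> y' \<longrightarrow> (c {x, y} = c {x', y'} \<longleftrightarrow> f {\<psi> x, \<psi> y} = f {\<psi> x', \<psi> y'})"]
      by simp
  next
    case False
    then show ?thesis unfolding is_copy_def clique by blast
  qed
qed

lemma pattern_free_relabel:
  assumes h: "inj h" and c: "\<And>e. e \<in> E \<Longrightarrow> c' (h ` e) = c e"
  shows "pattern_free (h ` V) ((`) h ` E) c' k f \<longleftrightarrow> pattern_free V E c k f"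
proof -
  have "X = h ` (h -` X)" if "is_copy (h ` V) ((`) h ` E) c' k f X" for X
    using that unfolding is_copy_def by blast
  then show ?thesis
    unfolding pattern_free_def using is_copy_relabel[of h E c' c, OF h c] by metis
qed

definition induced_edges :: "'a set set \<Rightarrow> 'a set \<Rightarrow> 'a set set" where
  "induced_edges E W = {e \<in> E. e \<subseteq> W}"

definition incident_edges :: "'a set set \<Rightarrow> 'a \<Rightarrow> 'a set set" where
  "incident_edges E t = {e \<in> E. t \<in> e}"

lemma is_copy_induced:
  assumes "X \<subseteq> W" "W \<subseteq> V"
  shows "is_copy W (induced_edges E W) c k f X \<longleftrightarrow> is_copy V E c k f X"
  using assms unfolding is_copy_def induced_edges_def by blast

lemma pattern_free_induced:
  assumes "W \<subseteq> V" "pattern_free V E c k f"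
  shows "pattern_free W (induced_edges E W) c k f"
proof -
  have "X \<subseteq> W" if "is_copy W (induced_edges E W) c k f X" for X
    using that unfolding is_copy_def by blast
  then show ?thesis
    using assms is_copy_induced[of _ W V E c k f] unfolding pattern_free_def by metis
qed

lemma simple_graph_edge_eq:
  assumes "simple_graph V E" "e \<in> E" "x \<in> e" "y \<in> e" "x \<noteq> y"
  shows "e = {x, y}"
proof -
  obtain a b where "e = {a, b}" using assms(1,2) card_2_iff unfolding simple_graph_def by metis
  then show ?thesis using assms(3-5) by auto
qed

lemma indep_set_edge_unique:
  assumes "simple_graph V E" "indep_set E T" "e \<in> E" "t \<in> T" "t' \<in> T" "t \<in> e" "t' \<in> e"
  shows "t = t'"
  using assms simple_graph_edge_eq[OF assms(1,3,6,7)] unfolding indep_set_def by blast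

lemma induced_edges_insert_indep:
  assumes "simple_graph V E" "indep_set E T" "t \<in> T"
  shows "induced_edges E (insert t (V - T)) = induced_edges E (V - T) \<union> incident_edges E t"
proof -
  have "e \<subseteq> insert t (V - T)" if "e \<in> E" "t \<in> e" for e
  proof
    fix x assume "x \<in> e"
    show "x \<in> insert t (V - T)"
    proof (cases "x = t")
      case False
      then have "x \<notin> T" using indep_set_edge_unique[OF assms(1,2) \<open>e \<in> E\<close> _ assms(3)] that \<open>x \<in> e\<close> by blast
      then show ?thesis using assms(1) that \<open>x \<in> e\<close> unfolding simple_graph_def by blast
    qed simp
  qed
  then show ?thesis unfolding induced_edges_def incident_edges_def by blast
qed

lemma edges_indep_partition:
  assumes "simple_graph V E" "indep_set E T"
  shows "E = induced_edges E (V - T) \<union> (\<Union>t\<in>T. incident_edges E t)"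
    and "\<And>t. t \<in> T \<Longrightarrow> induced_edges E (V - T) \<inter> incident_edges E t = {}"
    and "disjoint_family_on (incident_edges E) T"
proof -
  show "E = induced_edges E (V - T) \<union> (\<Union>t\<in>T. incident_edges E t)"
    using assms(1) unfolding simple_graph_def induced_edges_def incident_edges_def by blast
  show "induced_edges E (V - T) \<inter> incident_edges E t = {}" if "t \<in> T" for t
    using that unfolding induced_edges_def incident_edges_def by blast
  show "disjoint_family_on (incident_edges E) T"
    unfolding disjoint_family_on_def incident_edges_def
    using indep_set_edge_unique[OF assms] by blast
qed

lemma pattern_free_indep_iff:
  assumes "simple_graph V E" "T \<subseteq> V" "indep_set E T"
  shows "pattern_free V E c k f \<longleftrightarrow> pattern_free (V - T) (induced_edges E (V - T)) c k f \<and>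
    (\<forall>t\<in>T. pattern_free (insert t (V - T)) (induced_edges E (insert t (V - T))) c k f)"
proof (intro iffI conjI ballI)
  assume free: "pattern_free V E c k f"
  show "pattern_free (V - T) (induced_edges E (V - T)) c k f"
    by (rule pattern_free_induced[OF Diff_subset free])
  fix t assume "t \<in> T"
  then show "pattern_free (insert t (V - T)) (induced_edges E (insert t (V - T))) c k f"
    using assms(2) by (intro pattern_free_induced[OF _ free]) blast
next
  assume free: "pattern_free (V - T) (induced_edges E (V - T)) c k f \<and>
    (\<forall>t\<in>T. pattern_free (insert t (V - T)) (induced_edges E (insert t (V - T))) c k f)"
  show "pattern_free V E c k f" unfolding pattern_free_def
  proof
    assume "\<exists>X. is_copy V E c k f X"
    then obtain X where X: "is_copy V E c k f X" by blast
    then have XV: "X \<subseteq> V" and clique: "\<And>x y. x \<in> X \<Longrightarrow> y \<in> X \<Longrightarrow> x \<noteq> y \<Longrightarrow> {x, y} \<in> E"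
      unfolding is_copy_def by blast+
    show False
    proof (cases "X \<inter> T = {}")
      case True
      then have "X \<subseteq> V - T" using XV by blast
      then have "is_copy (V - T) (induced_edges E (V - T)) c k f X"
        using X by (rule iffD2[OF is_copy_induced[OF _ Diff_subset]])
      then show False using free unfolding pattern_free_def by blast
    next
      case False
      then obtain t where t: "t \<in> X" "t \<in> T" by blast
      have "x \<notin> T" if "x \<in> X" "x \<noteq> t" for x
        using assms(3) clique[OF that(1) t(1) that(2)] t(2) unfolding indep_set_def by blast
      then have "X \<subseteq> insert t (V - T)" using XV by blast
      moreover have "insert t (V - T) \<subseteq> V" using assms(2) t(2) by blast
      ultimately have "is_copy (insert t (V - T)) (induced_edges E (insert t (V - T))) c k f X"
        using X by (rule iffD2[OF is_copy_induced])
      then show False using free t(2) unfolding pattern_free_def by blast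
    qed
  qed
qed

lemma finite_edges: "simple_graph V E \<Longrightarrow> finite E"
  unfolding simple_graph_def by (meson Pow_iff finite_Pow_iff finite_subset subsetI)

lemma finite_colorings: "finite E \<Longrightarrow> finite (colorings r E)"
  unfolding colorings_def by (intro finite_PiE) auto

lemma colorings_partition_glue:
  assumes cover: "E = EA \<union> (\<Union>t\<in>T. St t)"
    and disj: "\<And>t. t \<in> T \<Longrightarrow> EA \<inter> St t = {}" "disjoint_family_on St T"
    and "cA \<in> colorings r EA" "ds \<in> (\<Pi>\<^sub>E t\<in>T. colorings r (St t))"
  shows "\<exists>c\<in>colorings r E. restrict c EA = cA \<and> (\<lambda>t\<in>T. restrict c (St t)) = ds"
proof -
  have cA: "cA \<in> EA \<rightarrow>\<^sub>E {1..r}" and ds: "ds \<in> (\<Pi>\<^sub>E t\<in>T. St t \<rightarrow>\<^sub>E {1..r})"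
    using assms(4,5) unfolding colorings_def by auto
  define owner where "owner e = (SOME t. t \<in> T \<and> e \<in> St t)" for e
  have owner: "owner e = t" if "t \<in> T" "e \<in> St t" for t e
  proof -
    have "owner e \<in> T \<and> e \<in> St (owner e)"
      unfolding owner_def using someI[of "\<lambda>t. t \<in> T \<and> e \<in> St t" t] that by blast
    then show ?thesis using disjoint_family_onD[OF disj(2), of "owner e" t] that by blast
  qed
  define c where "c e = (if e \<in> EA then cA e else if e \<in> E then ds (owner e) e else undefined)" for e
  have c_St: "c e = ds t e" if "t \<in> T" "e \<in> St t" for t e
  proof -
    have "e \<notin> EA" "e \<in> E" using that disj(1)[OF that(1)] cover by auto
    then show ?thesis using owner[OF that] by (simp add: c_def)
  qed
  have "c \<in> colorings r E"
  proof -
    have inside: "c e \<in> {1..r}" if "e \<in> E" for e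
    proof -
      consider "e \<in> EA" | t where "t \<in> T" "e \<in> St t" using \<open>e \<in> E\<close> cover by blast
      then show ?thesis
      proof cases
        case 1 then show ?thesis using cA by (auto simp: c_def)
      next
        case (2 t)
        then have "ds t \<in> St t \<rightarrow>\<^sub>E {1..r}" using ds by blast
        then have "ds t e \<in> {1..r}" using 2(2) by (rule PiE_mem)
        then show ?thesis using c_St[OF 2] by simp
      qed
    qed
    have outside: "c e = undefined" if "e \<notin> E" for e
      using that cover by (simp add: c_def)
    show ?thesis unfolding colorings_def by (rule PiE_I[OF inside outside])
  qed
  moreover have "restrict c EA = cA"
    by (intro ext) (simp add: c_def PiE_arb[OF cA])
  moreover have "(\<lambda>t\<in>T. restrict c (St t)) = ds"
  proof (rule ext)
    fix t show "(\<lambda>t\<in>T. restrict c (St t)) t = ds t"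
    proof (cases "t \<in> T")
      case True
      then have "ds t \<in> St t \<rightarrow>\<^sub>E {1..r}" using ds by blast
      then show ?thesis using True by (intro ext) (simp add: c_St PiE_arb[OF \<open>ds t \<in> _\<close>])
    qed (simp add: PiE_arb[OF ds])
  qed
  ultimately show ?thesis by blast
qed

lemma bij_betw_colorings_partition:
  assumes cover: "E = EA \<union> (\<Union>t\<in>T. St t)"
    and disj: "\<And>t. t \<in> T \<Longrightarrow> EA \<inter> St t = {}" "disjoint_family_on St T"
  shows "bij_betw (\<lambda>c. (restrict c EA, \<lambda>t\<in>T. restrict c (St t)))
           (colorings r E) (colorings r EA \<times> (\<Pi>\<^sub>E t\<in>T. colorings r (St t)))"
proof (rule bij_betwI')
  fix c c' assume c: "c \<in> colorings r E" and c': "c' \<in> colorings r E"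
  show "((restrict c EA, \<lambda>t\<in>T. restrict c (St t)) = (restrict c' EA, \<lambda>t\<in>T. restrict c' (St t)))
        \<longleftrightarrow> c = c'"
  proof
    assume eq: "(restrict c EA, \<lambda>t\<in>T. restrict c (St t)) = (restrict c' EA, \<lambda>t\<in>T. restrict c' (St t))"
    have "c e = c' e" if "e \<in> E" for e
    proof -
      consider "e \<in> EA" | t where "t \<in> T" "e \<in> St t" using \<open>e \<in> E\<close> cover by blast
      then show ?thesis
      proof cases
        case 1 then show ?thesis using fun_cong[OF arg_cong[OF eq, of fst], of e] by simp
      next
        case 2 then show ?thesis using fun_cong[OF fun_cong[OF arg_cong[OF eq, of snd], of t], of e] by simp
      qed
    qed
    then show "c = c'" using c c' unfolding colorings_def by (rule PiE_ext[rotated 2])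
  qed simp
next
  fix c assume "c \<in> colorings r E"
  then show "(restrict c EA, \<lambda>t\<in>T. restrict c (St t)) \<in> colorings r EA \<times> (\<Pi>\<^sub>E t\<in>T. colorings r (St t))"
    using cover unfolding colorings_def by auto
next
  fix p assume "p \<in> colorings r EA \<times> (\<Pi>\<^sub>E t\<in>T. colorings r (St t))"
  then obtain c where "c \<in> colorings r E" "restrict c EA = fst p" "(\<lambda>t\<in>T. restrict c (St t)) = snd p"
    using colorings_partition_glue[OF assms, of "fst p" r "snd p"] by (auto simp: mem_Times_iff)
  then show "\<exists>c\<in>colorings r E. p = (restrict c EA, \<lambda>t\<in>T. restrict c (St t))"
    by (metis prod.collapse)
qed

lemma bij_betw_colorings_relabel:
  assumes h: "inj h" and St: "(`) h ` St = St'"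
  shows "bij_betw (\<lambda>d. restrict (\<lambda>e'. d (h -` e')) St') (colorings r St) (colorings r St')"
proof (rule bij_betwI')
  fix d d' assume d: "d \<in> colorings r St" and d': "d' \<in> colorings r St"
  show "(restrict (\<lambda>e'. d (h -` e')) St' = restrict (\<lambda>e'. d' (h -` e')) St') \<longleftrightarrow> d = d'"
  proof
    assume eq: "restrict (\<lambda>e'. d (h -` e')) St' = restrict (\<lambda>e'. d' (h -` e')) St'"
    have "d e = d' e" if "e \<in> St" for e
      using fun_cong[OF eq, of "h ` e"] that St inj_vimage_image_eq[OF h] by auto
    then show "d = d'" using d d' unfolding colorings_def by (rule PiE_ext[rotated 2])
  qed simp
next
  fix d assume "d \<in> colorings r St"
  then show "restrict (\<lambda>e'. d (h -` e')) St' \<in> colorings r St'"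
    using St inj_vimage_image_eq[OF h] unfolding colorings_def by auto
next
  fix d' assume d': "d' \<in> colorings r St'"
  define d where "d = restrict (\<lambda>e. d' (h ` e)) St"
  have "d \<in> colorings r St" using d' St unfolding d_def colorings_def by auto
  moreover have "d' = restrict (\<lambda>e'. d (h -` e')) St'"
  proof (rule ext)
    fix e' show "d' e' = restrict (\<lambda>e'. d (h -` e')) St' e'"
    proof (cases "e' \<in> St'")
      case True
      then obtain e where "e \<in> St" "e' = h ` e" using St by blast
      then show ?thesis using True by (simp add: d_def inj_vimage_image_eq[OF h])
    next
      case False
      then show ?thesis using PiE_arb[OF d'[unfolded colorings_def]] by simp
    qed
  qed
  ultimately show "\<exists>d\<in>colorings r St. d' = restrict (\<lambda>e'. d (h -` e')) St'" by blast
qed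

definition free_colorings ::
    "nat \<Rightarrow> nat \<Rightarrow> (nat set \<Rightarrow> nat) \<Rightarrow> 'a set \<Rightarrow> 'a set set \<Rightarrow> ('a set \<Rightarrow> nat) set" where
  "free_colorings r k f V E = {c \<in> colorings r E. pattern_free V E c k f}"

definition free_extensions :: "nat \<Rightarrow> nat \<Rightarrow> (nat set \<Rightarrow> nat) \<Rightarrow> 'a set \<Rightarrow> 'a set set \<Rightarrow> 'a set set
    \<Rightarrow> ('a set \<Rightarrow> nat) \<Rightarrow> ('a set \<Rightarrow> nat) set" where
  "free_extensions r k f W EA St cA =
     {d \<in> colorings r St. pattern_free W (EA \<union> St) (override_on d cA EA) k f}"

lemma finite_free_colorings: "finite E \<Longrightarrow> finite (free_colorings r k f V E)"
  unfolding free_colorings_def by (rule finite_subset[OF _ finite_colorings]) auto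

lemma finite_free_extensions: "finite St \<Longrightarrow> finite (free_extensions r k f W EA St cA)"
  unfolding free_extensions_def by (rule finite_subset[OF _ finite_colorings]) auto

lemma free_colorings_as_extensions: "free_colorings r k f V E = free_extensions r k f V {} E c"
  unfolding free_colorings_def free_extensions_def by simp

lemma bij_betw_free_extensions_relabel:
  assumes h: "inj h" and EA: "(`) h ` EA = EA'" and St: "(`) h ` St = St'" and W: "h ` W = W'"
    and disj: "EA \<inter> St = {}" and cA: "\<And>e. e \<in> EA \<Longrightarrow> cA' (h ` e) = cA e"
  shows "bij_betw (\<lambda>d. restrict (\<lambda>e'. d (h -` e')) St')
           (free_extensions r k f W EA St cA) (free_extensions r k f W' EA' St' cA')"
  unfolding free_extensions_def
proof (rule bij_betw_Collect[OF bij_betw_colorings_relabel[OF h St]])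
  fix d
  have "override_on (restrict (\<lambda>e'. d (h -` e')) St') cA' EA' (h ` e) = override_on d cA EA e"
    if "e \<in> EA \<union> St" for e
  proof (cases "e \<in> EA")
    case True then show ?thesis using EA cA by (auto simp: override_on_def)
  next
    case False
    then have "h ` e \<notin> EA'" using EA inj_image_mem_iff[OF inj_on_image[of h UNIV]] h by auto
    then show ?thesis using False that St inj_vimage_image_eq[OF h] by (auto simp: override_on_def)
  qed
  from pattern_free_relabel[of h "EA \<union> St" "override_on (restrict (\<lambda>e'. d (h -` e')) St') cA' EA'"
      "override_on d cA EA" W k f, OF h this]
  show "pattern_free W' (EA' \<union> St') (override_on (restrict (\<lambda>e'. d (h -` e')) St') cA' EA') k f
      \<longleftrightarrow> pattern_free W (EA \<union> St) (override_on d cA EA) k f"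
    using EA St W by (simp add: image_Un)
qed

lemma bij_betw_free_colorings_indep:
  assumes G: "simple_graph V E" and T: "T \<subseteq> V" "indep_set E T"
  shows "bij_betw (\<lambda>c. (restrict c (induced_edges E (V - T)), \<lambda>t\<in>T. restrict c (incident_edges E t)))
    (free_colorings r k f V E)
    (SIGMA cA:free_colorings r k f (V - T) (induced_edges E (V - T)).
       \<Pi>\<^sub>E t\<in>T. free_extensions r k f (insert t (V - T)) (induced_edges E (V - T)) (incident_edges E t) cA)"
proof -
  let ?A = "V - T" and ?EA = "induced_edges E (V - T)" and ?St = "incident_edges E"
  define Q where "Q p \<longleftrightarrow> pattern_free ?A ?EA (fst p) k f \<and> (\<forall>t\<in>T.
      pattern_free (insert t ?A) (?EA \<union> ?St t) (override_on (snd p t) (fst p) ?EA) k f)"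
    for p :: "('a set \<Rightarrow> nat) \<times> ('a \<Rightarrow> 'a set \<Rightarrow> nat)"
  have "Q (restrict c ?EA, \<lambda>t\<in>T. restrict c (?St t)) \<longleftrightarrow> pattern_free V E c k f" for c
  proof -
    have "pattern_free ?A ?EA (restrict c ?EA) k f \<longleftrightarrow> pattern_free ?A ?EA c k f"
      by (rule pattern_free_cong) simp
    moreover have "pattern_free (insert t ?A) (?EA \<union> ?St t)
        (override_on (restrict c (?St t)) (restrict c ?EA) ?EA) k f
      \<longleftrightarrow> pattern_free (insert t ?A) (?EA \<union> ?St t) c k f" for t
      by (rule pattern_free_cong) (auto simp: override_on_def)
    ultimately show ?thesis
      unfolding Q_def pattern_free_indep_iff[OF G T]
      by (simp add: induced_edges_insert_indep[OF G T(2)])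
  qed
  then have "bij_betw (\<lambda>c. (restrict c ?EA, \<lambda>t\<in>T. restrict c (?St t))) (free_colorings r k f V E)
      {p \<in> colorings r ?EA \<times> (\<Pi>\<^sub>E t\<in>T. colorings r (?St t)). Q p}"
    unfolding free_colorings_def
    by (intro bij_betw_Collect bij_betw_colorings_partition edges_indep_partition[OF G T(2)])
  also have "{p \<in> colorings r ?EA \<times> (\<Pi>\<^sub>E t\<in>T. colorings r (?St t)). Q p}
      = (SIGMA cA:free_colorings r k f ?A ?EA.
           \<Pi>\<^sub>E t\<in>T. free_extensions r k f (insert t ?A) ?EA (?St t) cA)"
    unfolding Q_def free_colorings_def free_extensions_def by (auto simp: PiE_iff)
  finally show ?thesis .
qed

lemma count_free_indep_decomp:
  assumes G: "simple_graph V E" and T: "T \<subseteq> V" "indep_set E T"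
  shows "count_free r k f V E =
    (\<Sum>cA \<in> free_colorings r k f (V - T) (induced_edges E (V - T)).
       \<Prod>t\<in>T. card (free_extensions r k f (insert t (V - T)) (induced_edges E (V - T))
                      (incident_edges E t) cA))"
proof -
  have E: "finite E" and "finite T"
    using finite_edges[OF G] G T(1) finite_subset unfolding simple_graph_def by auto
  have "finite (free_colorings r k f (V - T) (induced_edges E (V - T)))"
    by (rule finite_free_colorings, rule finite_subset[OF _ E]) (auto simp: induced_edges_def)
  moreover have "finite (\<Pi>\<^sub>E t\<in>T. free_extensions r k f (insert t (V - T)) (induced_edges E (V - T))
      (incident_edges E t) cA)" for cA
    by (intro finite_PiE \<open>finite T\<close> finite_free_extensions finite_subset[OF _ E])
      (auto simp: incident_edges_def)
  ultimately show ?thesis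
    unfolding count_free_def free_colorings_def[symmetric]
      bij_betw_same_card[OF bij_betw_free_colorings_indep[OF G T]]
    by (simp add: card_PiE[OF \<open>finite T\<close>])
qed

lemma nbhd_indep_subset:
  assumes "simple_graph V E" "indep_set E S" "v \<in> S"
  shows "nbhd E v \<subseteq> V - S"
  using assms unfolding simple_graph_def indep_set_def nbhd_def by blast

lemma incident_edges_eq_nbhd:
  assumes "simple_graph V E"
  shows "incident_edges E v = (\<lambda>u. {u, v}) ` nbhd E v"
proof
  show "incident_edges E v \<subseteq> (\<lambda>u. {u, v}) ` nbhd E v"
  proof
    fix e assume "e \<in> incident_edges E v"
    then have "e \<in> E" "v \<in> e" unfolding incident_edges_def by auto
    then obtain u where "e = {u, v}"
      using assms card_2_iff unfolding simple_graph_def by (metis insert_commute insertE singletonD)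
    then show "e \<in> (\<lambda>u. {u, v}) ` nbhd E v" using \<open>e \<in> E\<close> unfolding nbhd_def by blast
  qed
qed (auto simp: incident_edges_def nbhd_def)

lemma twin_vertices_diff: "twin_vertices V S - Inr ` {0..<card S} = Inl ` (V - S)"
  unfolding twin_vertices_def by auto

lemma simple_graph_twin:
  assumes "simple_graph V E" "indep_set E S" "v \<in> S"
  shows "simple_graph (twin_vertices V S) (twin_edges V E S v)"
proof -
  have "e \<subseteq> twin_vertices V S \<and> card e = 2" if "e \<in> twin_edges V E S v" for e
  proof -
    from that consider e0 where "e0 \<in> E" "e0 \<subseteq> V - S" "e = Inl ` e0"
      | u i where "u \<in> nbhd E v" "i < card S" "e = {Inl u, Inr i}"
      unfolding twin_edges_def by blast
    then show ?thesis
    proof cases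
      case 1
      then show ?thesis
        using assms(1) unfolding twin_vertices_def simple_graph_def by (auto simp: card_image)
    next
      case 2
      then show ?thesis using nbhd_indep_subset[OF assms] unfolding twin_vertices_def by auto
    qed
  qed
  moreover have "finite (twin_vertices V S)"
    using assms(1) unfolding twin_vertices_def simple_graph_def by simp
  ultimately show ?thesis unfolding simple_graph_def by blast
qed

lemma indep_set_twin: "indep_set (twin_edges V E S v) (Inr ` {0..<card S})"
  unfolding indep_set_def twin_edges_def by (auto simp: doubleton_eq_iff)

lemma induced_edges_twin:
  "induced_edges (twin_edges V E S v) (Inl ` (V - S)) = (`) Inl ` induced_edges E (V - S)"
  unfolding induced_edges_def twin_edges_def by auto

lemma incident_edges_twin:
  assumes "simple_graph V E" "indep_set E S" "v \<in> S" "i < card S"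
  shows "incident_edges (twin_edges V E S v) (Inr i)
           = (`) (\<lambda>x. if x = v then Inr i else Inl x) ` incident_edges E v"
proof -
  have "v \<notin> nbhd E v" using nbhd_indep_subset[OF assms(1-3)] assms(3) by blast
  then have "(\<lambda>x. if x = v then Inr i else Inl x) ` {u, v} = {Inl u, Inr i}" if "u \<in> nbhd E v" for u
    using that by auto
  then have "(`) (\<lambda>x. if x = v then Inr i else Inl x) ` incident_edges E v
      = (\<lambda>u. {Inl u, Inr i}) ` nbhd E v"
    unfolding incident_edges_eq_nbhd[OF assms(1)] image_image by (rule image_cong[OF refl])
  also have "\<dots> = incident_edges (twin_edges V E S v) (Inr i)"
    using assms(4) unfolding incident_edges_def twin_edges_def by auto
  finally show ?thesis by simp
qed

lemma card_free_extensions_twin: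
  assumes G: "simple_graph V E" and S: "indep_set E S" and v: "v \<in> S" and i: "i < card S"
    and cA: "\<And>e. e \<in> induced_edges E (V - S) \<Longrightarrow> cA' (Inl ` e) = cA e"
  shows "card (free_extensions r k f (insert (Inr i) (Inl ` (V - S))) ((`) Inl ` induced_edges E (V - S))
             (incident_edges (twin_edges V E S v) (Inr i)) cA')
       = card (free_extensions r k f (insert v (V - S)) (induced_edges E (V - S))
             (incident_edges E v) cA)"
proof -
  let ?A = "V - S" and ?EA = "induced_edges E (V - S)"
  define h where "h x = (if x = v then Inr i else Inl x)" for x :: 'a
  have "inj h" unfolding h_def by (rule injI) (auto split: if_splits)
  have h_A: "h ` e = Inl ` e" if "e \<subseteq> ?A" for e
    using that v unfolding h_def by (intro image_cong) auto
  have "(`) h ` ?EA = (`) Inl ` ?EA"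
    unfolding induced_edges_def by (rule image_cong[OF refl]) (simp add: h_A)
  moreover have "(`) h ` incident_edges E v = incident_edges (twin_edges V E S v) (Inr i)"
    using incident_edges_twin[OF G S v i] unfolding h_def by simp
  moreover have "h ` insert v ?A = insert (Inr i) (Inl ` ?A)"
    using h_A[of ?A] by (simp add: h_def[of v])
  moreover have "?EA \<inter> incident_edges E v = {}"
    using v unfolding induced_edges_def incident_edges_def by blast
  moreover have "cA' (h ` e) = cA e" if "e \<in> ?EA" for e
    using that h_A cA unfolding induced_edges_def by auto
  ultimately show ?thesis
    by (rule bij_betw_same_card[OF bij_betw_free_extensions_relabel[OF \<open>inj h\<close>], symmetric])
qed

lemma count_free_twin_graph:
  assumes G: "simple_graph V E" and S: "S \<subseteq> V" "indep_set E S" and v: "v \<in> S"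
  shows "count_free r k f (twin_vertices V S) (twin_edges V E S v) =
    (\<Sum>cA \<in> free_colorings r k f (V - S) (induced_edges E (V - S)).
       card (free_extensions r k f (insert v (V - S)) (induced_edges E (V - S))
               (incident_edges E v) cA) ^ card S)"
proof -
  let ?A = "V - S" and ?EA = "induced_edges E (V - S)"
  let ?Et = "twin_edges V E S v" and ?EA' = "(`) (Inl :: 'a \<Rightarrow> 'a + nat) ` induced_edges E (V - S)"
  let ?ext' = "\<lambda>t cA'. free_extensions r k f (insert t (Inl ` ?A)) ?EA' (incident_edges ?Et t) cA'"
  define \<tau> where "\<tau> cA = restrict (\<lambda>e'. cA (Inl -` e')) ?EA'" for cA :: "'a set \<Rightarrow> nat"
  have "Inr ` {0..<card S} \<subseteq> twin_vertices V S" unfolding twin_vertices_def by blast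
  from count_free_indep_decomp[OF simple_graph_twin[OF G S(2) v] this indep_set_twin]
  have "count_free r k f (twin_vertices V S) ?Et
      = (\<Sum>cA' \<in> free_colorings r k f (Inl ` ?A) ?EA'. \<Prod>t\<in>Inr ` {0..<card S}. card (?ext' t cA'))"
    unfolding twin_vertices_diff induced_edges_twin .
  also have "\<dots> = (\<Sum>cA \<in> free_colorings r k f ?A ?EA. \<Prod>t\<in>Inr ` {0..<card S}. card (?ext' t (\<tau> cA)))"
  proof (rule sum.reindex_bij_betw[symmetric])
    show "bij_betw \<tau> (free_colorings r k f ?A ?EA) (free_colorings r k f (Inl ` ?A) ?EA')"
      unfolding free_colorings_as_extensions[where c = undefined] \<tau>_def
      by (rule bij_betw_free_extensions_relabel) auto
  qed
  also have "\<dots> = (\<Sum>cA \<in> free_colorings r k f ?A ?EA. \<Prod>i\<in>{0..<card S}.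
      card (free_extensions r k f (insert v ?A) ?EA (incident_edges E v) cA))"
  proof (intro sum.cong refl)
    fix cA
    have "\<tau> cA (Inl ` e) = cA e" if "e \<in> ?EA" for e
      using that unfolding \<tau>_def by (simp add: inj_vimage_image_eq)
    then show "(\<Prod>t\<in>Inr ` {0..<card S}. card (?ext' t (\<tau> cA))) = (\<Prod>i\<in>{0..<card S}.
        card (free_extensions r k f (insert v ?A) ?EA (incident_edges E v) cA))"
      by (simp add: prod.reindex card_free_extensions_twin[OF G S(2) v])
  qed
  finally show ?thesis by simp
qed

lemma card_mult_prod_le_sum_power:
  fixes x :: "'b \<Rightarrow> nat"
  assumes "finite S" "S \<noteq> {}"
  shows "card S * (\<Prod>u\<in>S. x u) \<le> (\<Sum>u\<in>S. x u ^ card S)"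
proof -
  let ?n = "card S" and ?P = "\<Prod>u\<in>S. real (x u)"
  have n: "?n > 0" using assms by (simp add: card_gt_0_iff)
  have "(?P ^ ?n) powr (1 / ?n) = ?P"
    using n by (simp add: prod_nonneg powr_realpow' root_powr_inverse[symmetric] real_root_pos2)
  moreover have "(\<Sum>u\<in>S. real (x u ^ ?n) / ?n) \<ge> (\<Prod>u\<in>S. real (x u ^ ?n)) powr (1 / ?n)"
    by (rule arith_geom_mean[OF assms]) simp
  ultimately have "(\<Sum>u\<in>S. real (x u ^ ?n)) / ?n \<ge> ?P"
    by (simp add: prod_power_distrib sum_divide_distrib)
  then have "real (?n * (\<Prod>u\<in>S. x u)) \<le> real (\<Sum>u\<in>S. x u ^ ?n)"
    using n by (simp add: field_simps)
  then show ?thesis by linarith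
qed

lemma exists_ge_of_card_mult_le_sum:
  fixes g :: "'b \<Rightarrow> nat"
  assumes "finite S" "S \<noteq> {}" "card S * a \<le> (\<Sum>u\<in>S. g u)"
  shows "\<exists>u\<in>S. a \<le> g u"
proof (rule ccontr)
  assume "\<not> (\<exists>u\<in>S. a \<le> g u)"
  then have "(\<Sum>u\<in>S. g u) < (\<Sum>u\<in>S. a)"
    using assms(1,2) by (intro sum_strict_mono) auto
  then show False using assms(3) by simp
qed

theorem lemma2p7:
  fixes V :: "'a set" and E :: "'a set set" and S :: "'a set"
    and r k :: nat and f :: "nat set \<Rightarrow> nat"
  assumes "r \<ge> 2" and "k \<ge> 3"
    and "f \<in> colorings r (Kk_edges k)"
    and "simple_graph V E"
    and "S \<subseteq> V" and "S \<noteq> {}" and "indep_set E S"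
  shows "\<exists>v\<in>S. count_free r k f (twin_vertices V S) (twin_edges V E S v)
                 \<ge> count_free r k f V E"
proof -
  let ?F = "free_colorings r k f (V - S) (induced_edges E (V - S))"
  let ?x = "\<lambda>u cA. card (free_extensions r k f (insert u (V - S)) (induced_edges E (V - S))
                       (incident_edges E u) cA)"
  have "finite S" using assms(4,5) finite_subset unfolding simple_graph_def by blast
  have "card S * count_free r k f V E = (\<Sum>cA\<in>?F. card S * (\<Prod>u\<in>S. ?x u cA))"
    by (simp add: count_free_indep_decomp[OF assms(4,5,7)] sum_distrib_left)
  also have "\<dots> \<le> (\<Sum>cA\<in>?F. \<Sum>u\<in>S. ?x u cA ^ card S)"
    by (intro sum_mono card_mult_prod_le_sum_power \<open>finite S\<close> assms(6))
  also have "\<dots> = (\<Sum>u\<in>S. count_free r k f (twin_vertices V S) (twin_edges V E S u))"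
    by (subst sum.swap) (simp add: count_free_twin_graph[OF assms(4,5,7)])
  finally show ?thesis
    using exists_ge_of_card_mult_le_sum[OF \<open>finite S\<close> assms(6)] by blast
qed

end
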